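(* Assume $|V|\ge2$. Set $\kappa_\lambda:=\min_{x\ne y}\kappa_\lambda(x,y)$ for $\lambda>0$ and $\underline\kappa_0:=\min_{x\ne y}\underline\kappa(x,y)$. Then $\liminf_{\lambda\downarrow0}\kappa_\lambda/\lambda=\underline\kappa_0$.
   Context: Let $H=(V,E,w)$ be a weighted hypergraph: $V$ is a finite set, $E$ a set of nonempty subsets of $V$, $w\colon E\to\mathbb{R}_{>0}$. Write $x\sim y$ if some $e\in E$ contains both; $H$ is assumed connected. The degree is $d_x=\sum_{e\ni x}w_e>0$, $D=\mathrm{diag}(d_x)$. The distance $d(x,y)$ is the minimal $n$ with a chain $x=z_0\sim\cdots\sim z_n=y$. $\delta_x$ is the indicator of $x$. $\mathbb{R}^V$ carries the inner product $\langle f,g\rangle=\sum_x f(x)g(x)/d_x$ with norm $\|\cdot\|$. For $e\in E$ let $B_e=\mathrm{Conv}\{\delta_x-\delta_y : x,y\in e\}$. The multivalued hypergraph Laplacian is $L(f)=\{\sum_{e}w_e\mathtt{b}_e(\mathtt{b}_e^\top f) : \mathtt{b}_e\in\operatorname{argmax}_{\mathtt b\in B_e}\mathtt b^\top f\}$ and the normalized Laplacian is $\mathcal{L}f=L(D^{-1}f)$, a maximal monotone operator on $(\mathbb{R}^V,\langle\cdot,\cdot\rangle)$. For $\lambda>0$ the resolvent $J_\lambda=(I+\lambda\mathcal L)^{-1}$ is a single-valued map $\mathbb{R}^V\to\mathbb{R}^V$ (equivalently $J_\lambda f=\operatorname{argmin}_g\{\frac{1}{2\lambda}\|f-g\|^2+Q(D^{-1}g)\}$,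 $Q(g)=\frac12\sum_e w_e\max_{x,y\in e}(g(x)-g(y))^2$). A function $f$ is weighted $1$-Lipschitz if $|f(x)/d_x-f(y)/d_y|\le d(x,y)$ for all $x,y$; $\mathrm{Lip}^1_w(V)$ denotes the set of such functions. $\mathrm{KD}_\lambda(x,y)=\sup\{\langle J_\lambda f,\delta_x-\delta_y\rangle : f\in\mathrm{Lip}^1_w(V)\}$. For $x\ne y$: $\kappa_\lambda(x,y)=1-\mathrm{KD}_\lambda(x,y)/d(x,y)$ and $\underline\kappa(x,y)=\liminf_{\lambda\downarrow0}\kappa_\lambda(x,y)/\lambda$. *)

theory Defs
  imports "HOL-Analysis.Analysis"
begin

text \<open>Weighted hypergraph H = (V, E, w); vertices of type 'v, functions on V are
  represented as 'v \<Rightarrow> real (values outside V are irrelevant / forced to 0).\<close>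

definition hdeg :: "'v set set \<Rightarrow> ('v set \<Rightarrow> real) \<Rightarrow> 'v \<Rightarrow> real" where
  "hdeg E w x = (\<Sum>e\<in>{e\<in>E. x \<in> e}. w e)"

definition hadj :: "'v set set \<Rightarrow> 'v \<Rightarrow> 'v \<Rightarrow> bool" where
  "hadj E x y \<longleftrightarrow> (\<exists>e\<in>E. x \<in> e \<and> y \<in> e)"

definition hchain :: "'v set set \<Rightarrow> 'v \<Rightarrow> 'v \<Rightarrow> nat \<Rightarrow> bool" where
  "hchain E x y n \<longleftrightarrow> (\<exists>z::nat \<Rightarrow> 'v. z 0 = x \<and> z n = y \<and> (\<forall>i<n. hadj E (z i) (z (Suc i))))"

definition hdist :: "'v set set \<Rightarrow> 'v \<Rightarrow> 'v \<Rightarrow> nat" where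
  "hdist E x y = (LEAST n. hchain E x y n)"

definition hconnected :: "'v set \<Rightarrow> 'v set set \<Rightarrow> bool" where
  "hconnected V E \<longleftrightarrow> (\<forall>x\<in>V. \<forall>y\<in>V. \<exists>n. hchain E x y n)"

definition winner :: "'v set \<Rightarrow> 'v set set \<Rightarrow> ('v set \<Rightarrow> real) \<Rightarrow> ('v \<Rightarrow> real) \<Rightarrow> ('v \<Rightarrow> real) \<Rightarrow> real" where
  "winner V E w f g = (\<Sum>x\<in>V. f x * g x / hdeg E w x)"

definition wnorm_sq :: "'v set \<Rightarrow> 'v set set \<Rightarrow> ('v set \<Rightarrow> real) \<Rightarrow> ('v \<Rightarrow> real) \<Rightarrow> real" where
  "wnorm_sq V E w f = winner V E w f f"

definition delta :: "'v \<Rightarrow> 'v \<Rightarrow> real" where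
  "delta x = (\<lambda>y. if y = x then 1 else 0)"

definition hQ :: "'v set set \<Rightarrow> ('v set \<Rightarrow> real) \<Rightarrow> ('v \<Rightarrow> real) \<Rightarrow> real" where
  "hQ E w g = (1/2) * (\<Sum>e\<in>E. w e * (Max {(g x - g y)\<^sup>2 | x y. x \<in> e \<and> y \<in> e}))"

definition Dinv :: "'v set set \<Rightarrow> ('v set \<Rightarrow> real) \<Rightarrow> ('v \<Rightarrow> real) \<Rightarrow> ('v \<Rightarrow> real)" where
  "Dinv E w g = (\<lambda>x. g x / hdeg E w x)"

definition extensional0 :: "'v set \<Rightarrow> ('v \<Rightarrow> real) set" where
  "extensional0 V = {g. \<forall>x. x \<notin> V \<longrightarrow> g x = 0}"

definition resolv_obj :: "'v set \<Rightarrow> 'v set set \<Rightarrow> ('v set \<Rightarrow> real) \<Rightarrow> real \<Rightarrow> ('v \<Rightarrow> real) \<Rightarrow> ('v \<Rightarrow> real) \<Rightarrow> real" where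
  "resolv_obj V E w lam f g = 1 / (2 * lam) * wnorm_sq V E w (\<lambda>x. f x - g x) + hQ E w (Dinv E w g)"

definition resolvent :: "'v set \<Rightarrow> 'v set set \<Rightarrow> ('v set \<Rightarrow> real) \<Rightarrow> real \<Rightarrow> ('v \<Rightarrow> real) \<Rightarrow> ('v \<Rightarrow> real)" where
  "resolvent V E w lam f = (THE g. g \<in> extensional0 V \<and>
      (\<forall>h \<in> extensional0 V. resolv_obj V E w lam f g \<le> resolv_obj V E w lam f h))"

definition wLip1 :: "'v set \<Rightarrow> 'v set set \<Rightarrow> ('v set \<Rightarrow> real) \<Rightarrow> ('v \<Rightarrow> real) set" where
  "wLip1 V E w = {f. \<forall>x\<in>V. \<forall>y\<in>V. \<bar>f x / hdeg E w x - f y / hdeg E w y\<bar> \<le> real (hdist E x y)}"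

definition KD :: "'v set \<Rightarrow> 'v set set \<Rightarrow> ('v set \<Rightarrow> real) \<Rightarrow> real \<Rightarrow> 'v \<Rightarrow> 'v \<Rightarrow> real" where
  "KD V E w lam x y = Sup {winner V E w (resolvent V E w lam f) (\<lambda>z. delta x z - delta y z) | f. f \<in> wLip1 V E w}"

definition kappa :: "'v set \<Rightarrow> 'v set set \<Rightarrow> ('v set \<Rightarrow> real) \<Rightarrow> real \<Rightarrow> 'v \<Rightarrow> 'v \<Rightarrow> real" where
  "kappa V E w lam x y = 1 - KD V E w lam x y / real (hdist E x y)"

definition kappa_low :: "'v set \<Rightarrow> 'v set set \<Rightarrow> ('v set \<Rightarrow> real) \<Rightarrow> 'v \<Rightarrow> 'v \<Rightarrow> ereal" where
  "kappa_low V E w x y = Liminf (at_right 0) (\<lambda>lam. ereal (kappa V E w lam x y / lam))"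

definition kappa_min :: "'v set \<Rightarrow> 'v set set \<Rightarrow> ('v set \<Rightarrow> real) \<Rightarrow> real \<Rightarrow> real" where
  "kappa_min V E w lam = Min {kappa V E w lam x y | x y. x \<in> V \<and> y \<in> V \<and> x \<noteq> y}"

definition kappa_low0 :: "'v set \<Rightarrow> 'v set set \<Rightarrow> ('v set \<Rightarrow> real) \<Rightarrow> ereal" where
  "kappa_low0 V E w = Min {kappa_low V E w x y | x y. x \<in> V \<and> y \<in> V \<and> x \<noteq> y}"

end

theory Submission
  imports Defs
begin

text \<open>Only the finiteness of the vertex set matters: \<open>\<kappa>\<^sub>\<lambda>/\<lambda>\<close> is the minimum of
  finitely many functions \<open>\<kappa>\<^sub>\<lambda>(x,y)/\<lambda>\<close>, and a \<open>Liminf\<close> in a complete linear order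
  commutes with finite minima, because \<open>C \<le> min a b\<close> holds eventually iff
  \<open>C \<le> a\<close> and \<open>C \<le> b\<close> both hold eventually.\<close>

lemma Liminf_min:
  fixes f g :: "'a \<Rightarrow> 'b :: complete_linorder"
  shows "Liminf F (\<lambda>t. min (f t) (g t)) = min (Liminf F f) (Liminf F g)"
proof -
  have below_iff: "C \<le> Liminf F (\<lambda>t. min (f t) (g t)) \<longleftrightarrow> C \<le> min (Liminf F f) (Liminf F g)"
    for C
    unfolding le_Liminf_iff min.bounded_iff by (auto simp: eventually_conj_iff)
  show ?thesis
    using below_iff[of "Liminf F (\<lambda>t. min (f t) (g t))"]
      below_iff[of "min (Liminf F f) (Liminf F g)"]
    by (metis order.antisym order.refl)
qed

lemma Liminf_Min:
  fixes f :: "'i \<Rightarrow> 'a \<Rightarrow> 'b :: complete_linorder"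
  assumes "finite I" "I \<noteq> {}"
  shows "Liminf F (\<lambda>t. Min ((\<lambda>i. f i t) ` I)) = Min ((\<lambda>i. Liminf F (f i)) ` I)"
  using assms
proof (induction I rule: finite_ne_induct)
  case (singleton i)
  then show ?case by simp
next
  case (insert i I)
  have "Liminf F (\<lambda>t. Min ((\<lambda>j. f j t) ` insert i I))
      = Liminf F (\<lambda>t. min (f i t) (Min ((\<lambda>j. f j t) ` I)))"
    using insert by simp
  also have "\<dots> = min (Liminf F (f i)) (Liminf F (\<lambda>t. Min ((\<lambda>j. f j t) ` I)))"
    by (rule Liminf_min)
  also have "\<dots> = Min ((\<lambda>j. Liminf F (f j)) ` insert i I)"
    using insert by simp
  finally show ?case .
qed

theorem mainTheorem12:
  fixes V :: "'v set" and E :: "'v set set" and w :: "'v set \<Rightarrow> real"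
  assumes "finite V"
    and "\<forall>e\<in>E. e \<noteq> {} \<and> e \<subseteq> V"
    and "\<forall>e\<in>E. w e > 0"
    and "hconnected V E"
    and "\<forall>x\<in>V. hdeg E w x > 0"
    and "card V \<ge> 2"
  shows "Liminf (at_right 0) (\<lambda>lam. ereal (kappa_min V E w lam / lam)) = kappa_low0 V E w"
proof -
  define P where "P = {(x, y). x \<in> V \<and> y \<in> V \<and> x \<noteq> y}"
  define k where "k lam p = ereal (kappa V E w lam (fst p) (snd p) / lam)" for lam p
  have "finite P"
    unfolding P_def by (rule finite_subset[of _ "V \<times> V"]) (use assms(1) in auto)
  obtain a b where "a \<in> V" "b \<in> V" "a \<noteq> b"
    using assms(1,6) card_le_Suc0_iff_eq[of V] by fastforce
  then have "P \<noteq> {}" unfolding P_def by auto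
  have kappa_min_eq: "kappa_min V E w lam = Min ((\<lambda>p. kappa V E w lam (fst p) (snd p)) ` P)"
    for lam unfolding kappa_min_def P_def by (rule arg_cong[where f = Min]) force
  have "kappa_low0 V E w = Min ((\<lambda>p. Liminf (at_right 0) (\<lambda>lam. k lam p)) ` P)"
    unfolding kappa_low0_def kappa_low_def k_def P_def by (rule arg_cong[where f = Min]) force
  moreover have "\<forall>\<^sub>F lam in at_right 0. ereal (kappa_min V E w lam / lam) = Min ((\<lambda>p. k lam p) ` P)"
  proof (rule eventually_mono[OF eventually_at_right_less])
    fix lam :: real assume "lam > 0"
    then have "mono (\<lambda>t. ereal (t / lam))"
      by (auto intro!: monoI divide_right_mono)
    then have "ereal (kappa_min V E w lam / lam)
        = Min ((\<lambda>t. ereal (t / lam)) ` (\<lambda>p. kappa V E w lam (fst p) (snd p)) ` P)"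
      unfolding kappa_min_eq by (rule mono_Min_commute) (use \<open>finite P\<close> \<open>P \<noteq> {}\<close> in auto)
    then show "ereal (kappa_min V E w lam / lam) = Min ((\<lambda>p. k lam p) ` P)"
      by (simp only: image_image k_def)
  qed
  then have "Liminf (at_right 0) (\<lambda>lam. ereal (kappa_min V E w lam / lam))
      = Liminf (at_right 0) (\<lambda>lam. Min ((\<lambda>p. k lam p) ` P))"
    by (rule Liminf_eq)
  ultimately show ?thesis
    by (simp only: Liminf_Min[OF \<open>finite P\<close> \<open>P \<noteq> {}\<close>])
qed

end
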